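(* Let $K/k$ be a finite field extension and let $G$ be a finite group acting on $K(x_1,\ldots,x_n)$ by quasi-monomial $k$-automorphisms. Then there exists a normal subgroup $N$ of $G$ such that: (i) $K(x_1,\ldots,x_n)^N=K^N(y_1,\ldots,y_n)$, where $y_1,\ldots,y_n$ are algebraically independent over $K^N$ and each $y_i$ is of the form $a\,x_1^{e_1}x_2^{e_2}\cdots x_n^{e_n}$ with $a\in K^\times$ and $e_1,\ldots,e_n\in\mathbb{Z}$ (and one may take $a=1$ if the action of $G$ is purely quasi-monomial); (ii) $G/N$ acts on $K^N(y_1,\ldots,y_n)$ by quasi-monomial $k$-automorphisms; (iii) the homomorphism $\rho_{\underline{y}}\colon G/N\to GL_n(\mathbb{Z})$ associated to this action (with respect to $y_1,\ldots,y_n$) is injective.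
   Context: Let $K/k$ be a finite field extension and $K(x_1,\ldots,x_n)$ the rational function field over $K$. A finite subgroup $G\subset \mathrm{Aut}_k(K(x_1,\ldots,x_n))$ acts by quasi-monomial $k$-automorphisms if (i) $\sigma(K)\subset K$ for all $\sigma\in G$; (ii) $K^G=k$; (iii) for every $\sigma\in G$ and $1\le j\le n$, $\sigma(x_j)=c_j(\sigma)\prod_{i=1}^n x_i^{a_{ij}}$ with $c_j(\sigma)\in K^\times$ and $[a_{ij}]_{1\le i,j\le n}\in GL_n(\mathbb{Z})$. The action is purely quasi-monomial if moreover all $c_j(\sigma)=1$. The associated homomorphism $\rho_{\underline{x}}\colon G\to GL_n(\mathbb{Z})$ is $\rho_{\underline{x}}(\sigma)=[a_{ij}]$ where the $a_{ij}$ are as in (iii). *)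

theory Defs
  imports Main
begin

definition is_subfield :: "'L::field set \<Rightarrow> bool" where
  "is_subfield S \<longleftrightarrow> 0 \<in> S \<and> 1 \<in> S \<and>
     (\<forall>a\<in>S. \<forall>b\<in>S. a + b \<in> S \<and> a * b \<in> S \<and> a - b \<in> S) \<and>
     (\<forall>a\<in>S. inverse a \<in> S)"

definition field_gen :: "'L::field set \<Rightarrow> 'L set \<Rightarrow> 'L set" where
  "field_gen F S = \<Inter>{T. is_subfield T \<and> F \<subseteq> T \<and> S \<subseteq> T}"

definition finite_ext :: "'L::field set \<Rightarrow> 'L set \<Rightarrow> bool" where
  "finite_ext K k \<longleftrightarrow> is_subfield k \<and> is_subfield K \<and> k \<subseteq> K \<and>
     (\<exists>B. finite B \<and> B \<subseteq> K \<and>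
        (\<forall>a\<in>K. \<exists>c. (\<forall>b\<in>B. c b \<in> k) \<and> a = (\<Sum>b\<in>B. c b * b)))"

text \<open>Algebraic independence of y 0, ..., y (n-1) over F: every polynomial
  (finitely supported coefficient function on exponent vectors of length n)
  with coefficients in F vanishing at y is zero.\<close>
definition alg_indep :: "'L::field set \<Rightarrow> (nat \<Rightarrow> 'L) \<Rightarrow> nat \<Rightarrow> bool" where
  "alg_indep F y n \<longleftrightarrow>
     (\<forall>(c :: (nat \<Rightarrow> nat) \<Rightarrow> 'L) M. finite M \<and> (\<forall>m\<in>M. \<forall>i\<ge>n. m i = 0) \<and>
        (\<forall>m\<in>M. c m \<in> F) \<and> (\<Sum>m\<in>M. c m * (\<Prod>i<n. y i ^ m i)) = 0
        \<longrightarrow> (\<forall>m\<in>M. c m = 0))"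

definition field_aut :: "('L::field \<Rightarrow> 'L) \<Rightarrow> bool" where
  "field_aut \<sigma> \<longleftrightarrow> bij \<sigma> \<and> \<sigma> 1 = 1 \<and>
     (\<forall>a b. \<sigma> (a + b) = \<sigma> a + \<sigma> b \<and> \<sigma> (a * b) = \<sigma> a * \<sigma> b)"

definition aut_group :: "('L::field \<Rightarrow> 'L) set \<Rightarrow> bool" where
  "aut_group G \<longleftrightarrow> (\<forall>\<sigma>\<in>G. field_aut \<sigma>) \<and> id \<in> G \<and>
     (\<forall>\<sigma>\<in>G. \<forall>\<tau>\<in>G. \<sigma> \<circ> \<tau> \<in> G) \<and> (\<forall>\<sigma>\<in>G. inv \<sigma> \<in> G)"

definition normal_subgroup :: "('L::field \<Rightarrow> 'L) set \<Rightarrow> ('L \<Rightarrow> 'L) set \<Rightarrow> bool" where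
  "normal_subgroup N G \<longleftrightarrow> N \<subseteq> G \<and> aut_group N \<and>
     (\<forall>\<sigma>\<in>G. \<forall>\<tau>\<in>N. \<sigma> \<circ> \<tau> \<circ> inv \<sigma> \<in> N)"

definition fixed :: "'L set \<Rightarrow> ('L \<Rightarrow> 'L) set \<Rightarrow> 'L set" where
  "fixed S G = {a\<in>S. \<forall>\<sigma>\<in>G. \<sigma> a = a}"

definition gl_int :: "nat \<Rightarrow> (nat \<Rightarrow> nat \<Rightarrow> int) \<Rightarrow> bool" where
  "gl_int n A \<longleftrightarrow> (\<exists>B. \<forall>i<n. \<forall>j<n.
      (\<Sum>l<n. A i l * B l j) = (if i = j then 1 else 0) \<and>
      (\<Sum>l<n. B i l * A l j) = (if i = j then 1 else 0))"

definition lmon :: "(nat \<Rightarrow> 'L::field) \<Rightarrow> nat \<Rightarrow> (nat \<Rightarrow> nat \<Rightarrow> int) \<Rightarrow> nat \<Rightarrow> 'L" where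
  "lmon z n A j = (\<Prod>i<n. z i powi A i j)"

text \<open>sigma(z_j) = c_j(sigma) * prod_i z_i^(a_ij) with c_j(sigma) in F^* and
  A = [a_ij] in GL_n(Z); i.e. A is the matrix rho_z(sigma).\<close>
definition qm_matrix :: "('L::field \<Rightarrow> 'L) \<Rightarrow> 'L set \<Rightarrow> (nat \<Rightarrow> 'L) \<Rightarrow> nat
    \<Rightarrow> (nat \<Rightarrow> nat \<Rightarrow> int) \<Rightarrow> bool" where
  "qm_matrix \<sigma> F z n A \<longleftrightarrow> gl_int n A \<and>
     (\<forall>j<n. \<exists>c. c \<in> F \<and> c \<noteq> 0 \<and> \<sigma> (z j) = c * lmon z n A j)"

definition qm_action :: "('L::field \<Rightarrow> 'L) set \<Rightarrow> 'L set \<Rightarrow> 'L set \<Rightarrow> (nat \<Rightarrow> 'L) \<Rightarrow> nat \<Rightarrow> bool" where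
  "qm_action G k F z n \<longleftrightarrow> (\<forall>\<sigma>\<in>G. \<sigma> ` F \<subseteq> F) \<and> fixed F G = k \<and>
     (\<forall>\<sigma>\<in>G. \<exists>A. qm_matrix \<sigma> F z n A)"

definition purely_qm :: "('L::field \<Rightarrow> 'L) set \<Rightarrow> (nat \<Rightarrow> 'L) \<Rightarrow> nat \<Rightarrow> bool" where
  "purely_qm G z n \<longleftrightarrow> (\<forall>\<sigma>\<in>G. \<exists>A. gl_int n A \<and> (\<forall>j<n. \<sigma> (z j) = lmon z n A j))"

end

theory Submission
  imports Defs
begin

(* Let N be the kernel of rho_x: the elements of G multiplying every x_j by a scalar in K.
   N is normal in G and acts diagonally on Laurent monomials, so, by algebraic independence,
   an N-invariant fraction, written as P/Q with the denominator cleared by its norm over N,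
   is a K-combination of N-invariant terms c x^m.  The exponents m of such terms form a
   lattice containing |N| Z^n; the monomials y_i = a_i x^(b_i) attached to a triangular
   basis b_1, ..., b_n of this lattice are algebraically independent and generate K(x)^N
   over K^N.  Every element of G preserves N-invariants, so it sends y_j to an N-invariant
   scalar times a Laurent monomial in y: the action on K^N(y) is quasi-monomial.  Finally,
   if two elements of G have the same matrix on y, their quotient fixes every b_i; since
   the lattice has full rank, its matrix on x is the identity, i.e. it lies in N. *)

section \<open>Subfields and field automorphisms\<close>

lemma subfield_0: "is_subfield S \<Longrightarrow> 0 \<in> S"
  by (simp add: is_subfield_def)
lemma subfield_1: "is_subfield S \<Longrightarrow> 1 \<in> S"
  by (simp add: is_subfield_def)
lemma subfield_add: "is_subfield S \<Longrightarrow> a \<in> S \<Longrightarrow> b \<in> S \<Longrightarrow> a + b \<in> S"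
  by (simp add: is_subfield_def)
lemma subfield_mult: "is_subfield S \<Longrightarrow> a \<in> S \<Longrightarrow> b \<in> S \<Longrightarrow> a * b \<in> S"
  by (simp add: is_subfield_def)
lemma subfield_diff: "is_subfield S \<Longrightarrow> a \<in> S \<Longrightarrow> b \<in> S \<Longrightarrow> a - b \<in> S"
  by (simp add: is_subfield_def)
lemma subfield_inverse: "is_subfield S \<Longrightarrow> a \<in> S \<Longrightarrow> inverse a \<in> S"
  by (simp add: is_subfield_def)
lemma subfield_uminus: "is_subfield S \<Longrightarrow> a \<in> S \<Longrightarrow> - a \<in> S"
  using subfield_diff[of S 0 a] subfield_0[of S] by simp
lemma subfield_divide: "is_subfield S \<Longrightarrow> a \<in> S \<Longrightarrow> b \<in> S \<Longrightarrow> a / b \<in> S"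
  by (simp add: divide_inverse subfield_mult subfield_inverse)
lemma subfield_power: "is_subfield S \<Longrightarrow> a \<in> S \<Longrightarrow> a ^ k \<in> S"
  by (induction k) (auto intro: subfield_1 subfield_mult)
lemma subfield_power_int: "is_subfield S \<Longrightarrow> a \<in> S \<Longrightarrow> a powi k \<in> S"
  by (simp add: power_int_def subfield_power subfield_inverse)
lemma subfield_sum: "is_subfield S \<Longrightarrow> (\<And>i. i \<in> A \<Longrightarrow> f i \<in> S) \<Longrightarrow> sum f A \<in> S"
  by (induction A rule: infinite_finite_induct) (auto intro: subfield_0 subfield_add)
lemma subfield_prod: "is_subfield S \<Longrightarrow> (\<And>i. i \<in> A \<Longrightarrow> f i \<in> S) \<Longrightarrow> prod f A \<in> S"
  by (induction A rule: infinite_finite_induct) (auto intro: subfield_1 subfield_mult)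

lemma subfield_UNIV: "is_subfield UNIV"
  by (simp add: is_subfield_def)

lemma is_subfield_field_gen: "is_subfield (field_gen F S)"
  unfolding is_subfield_def field_gen_def by auto
lemma field_gen_base_subset: "F \<subseteq> field_gen F S"
  unfolding field_gen_def by auto
lemma field_gen_gens_subset: "S \<subseteq> field_gen F S"
  unfolding field_gen_def by auto
lemma field_gen_least: "is_subfield T \<Longrightarrow> F \<subseteq> T \<Longrightarrow> S \<subseteq> T \<Longrightarrow> field_gen F S \<subseteq> T"
  unfolding field_gen_def by auto

lemma field_aut_add: "field_aut s \<Longrightarrow> s (a + b) = s a + s b"
  by (simp add: field_aut_def)
lemma field_aut_mult: "field_aut s \<Longrightarrow> s (a * b) = s a * s b"
  by (simp add: field_aut_def)
lemma field_aut_1: "field_aut s \<Longrightarrow> s 1 = 1"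
  by (simp add: field_aut_def)
lemma field_aut_bij: "field_aut s \<Longrightarrow> bij s"
  by (simp add: field_aut_def)
lemma field_aut_0: "field_aut s \<Longrightarrow> s 0 = 0"
  using field_aut_add[of s 0 0] by (metis add.right_neutral add_left_cancel)
lemma field_aut_uminus: "field_aut s \<Longrightarrow> s (- a) = - s a"
  using field_aut_add[of s a "- a"] field_aut_0[of s] by (metis add.right_inverse minus_unique)
lemma field_aut_diff: "field_aut s \<Longrightarrow> s (a - b) = s a - s b"
  using field_aut_add[of s a "- b"] field_aut_uminus[of s b] by simp
lemma field_aut_eq_0_iff: "field_aut s \<Longrightarrow> s a = 0 \<longleftrightarrow> a = 0"
  using field_aut_bij[of s] field_aut_0[of s] by (metis bij_is_inj injD)
lemma field_aut_inverse: "field_aut s \<Longrightarrow> s (inverse a) = inverse (s a)"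
  using field_aut_mult[of s a "inverse a"] field_aut_1[of s] field_aut_eq_0_iff[of s a]
  by (cases "a = 0") (auto simp: field_aut_0 inverse_unique)
lemma field_aut_divide: "field_aut s \<Longrightarrow> s (a / b) = s a / s b"
  by (simp add: divide_inverse field_aut_mult field_aut_inverse)
lemma field_aut_power: "field_aut s \<Longrightarrow> s (a ^ k) = s a ^ k"
  by (induction k) (auto simp: field_aut_1 field_aut_mult)
lemma field_aut_power_int: "field_aut s \<Longrightarrow> s (a powi k) = s a powi k"
  by (simp add: power_int_def field_aut_power field_aut_inverse)
lemma field_aut_prod: "field_aut s \<Longrightarrow> s (prod f A) = (\<Prod>i\<in>A. s (f i))"
  by (induction A rule: infinite_finite_induct) (auto simp: field_aut_1 field_aut_mult)
lemma field_aut_sum: "field_aut s \<Longrightarrow> s (sum f A) = (\<Sum>i\<in>A. s (f i))"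
  by (induction A rule: infinite_finite_induct) (auto simp: field_aut_0 field_aut_add)

lemma fixed_subfield:
  assumes auts: "\<forall>t\<in>H. field_aut t" and S: "is_subfield S"
  shows "is_subfield (fixed S H)"
  using assms unfolding is_subfield_def fixed_def
  by (auto simp: field_aut_0 field_aut_1 field_aut_add field_aut_mult field_aut_diff
      field_aut_inverse)

lemma aut_group_apply_inv: "aut_group G \<Longrightarrow> s \<in> G \<Longrightarrow> s (inv s a) = a"
  unfolding aut_group_def by (meson bij_inv_eq_iff field_aut_bij)
lemma aut_group_inv_apply: "aut_group G \<Longrightarrow> s \<in> G \<Longrightarrow> inv s (s a) = a"
  unfolding aut_group_def by (meson bij_is_inj inv_f_f field_aut_bij)

lemma aut_group_prod_orbit_fixed:
  assumes H: "aut_group H" and s: "s \<in> H" and fin: "finite H"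
  shows "s (\<Prod>t\<in>H. t w) = (\<Prod>t\<in>H. t w)"
proof -
  have "bij_betw ((\<circ>) s) H H"
    by (rule bij_betw_byWitness[where f' = "(\<circ>) (inv s)"])
      (use H s in \<open>auto simp: aut_group_def fun_eq_iff aut_group_apply_inv[OF H] aut_group_inv_apply[OF H]\<close>)
  then have "(\<Prod>t\<in>H. (s \<circ> t) w) = (\<Prod>t\<in>H. t w)"
    by (rule prod.reindex_bij_betw)
  then show ?thesis
    using H s by (simp add: aut_group_def field_aut_prod)
qed

lemma normal_subgroup_conj:
  assumes "aut_group G" "normal_subgroup N G" "s \<in> G" "t \<in> N"
  shows "inv s \<circ> t \<circ> s \<in> N"
  using assms unfolding normal_subgroup_def aut_group_def
  by (metis field_aut_bij inv_inv_eq)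

lemma normal_subgroup_fixed_image:
  assumes G: "aut_group G" and N: "normal_subgroup N G" and s: "s \<in> G" and S: "s ` S \<subseteq> S"
  shows "s ` fixed S N \<subseteq> fixed S N"
proof (rule image_subsetI)
  fix a assume a: "a \<in> fixed S N"
  have "t (s a) = s a" if t: "t \<in> N" for t
  proof -
    have "(inv s \<circ> t \<circ> s) a = a"
      using normal_subgroup_conj[OF G N s t] a unfolding fixed_def by blast
    then have "s (inv s (t (s a))) = s a"
      by simp
    then show ?thesis
      by (simp only: aut_group_apply_inv[OF G s])
  qed
  then show "s a \<in> fixed S N"
    using a S by (auto simp: fixed_def)
qed


section \<open>Laurent monomials\<close>

definition laurent :: "(nat \<Rightarrow> 'L::field) \<Rightarrow> nat \<Rightarrow> (nat \<Rightarrow> int) \<Rightarrow> 'L" where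
  "laurent z n u = (\<Prod>i<n. z i powi u i)"

lemma lmon_eq_laurent: "lmon z n A j = laurent z n (\<lambda>i. A i j)"
  by (simp add: lmon_def laurent_def)

lemma laurent_of_nat: "laurent z n (\<lambda>i. int (m i)) = (\<Prod>i<n. z i ^ m i)"
  by (simp add: laurent_def)

lemma laurent_cong:
  "(\<And>i. i < n \<Longrightarrow> z i = w i) \<Longrightarrow> (\<And>i. i < n \<Longrightarrow> u i = v i) \<Longrightarrow> laurent z n u = laurent w n v"
  unfolding laurent_def by (rule prod.cong) auto

lemma laurent_field_aut: "field_aut s \<Longrightarrow> s (laurent z n u) = laurent (\<lambda>i. s (z i)) n u"
  by (simp add: laurent_def field_aut_prod field_aut_power_int)

lemma prod_power_int_distrib: "(\<Prod>i\<in>A. f i) powi k = (\<Prod>i\<in>A. (f i :: 'a::field) powi k)"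
  by (induction A rule: infinite_finite_induct) (auto simp: power_int_mult_distrib)

lemma laurent_scaled:
  "laurent (\<lambda>i. c i * z i) n u = (\<Prod>i<n. c i powi u i) * laurent z n u"
  by (simp add: laurent_def power_int_mult_distrib prod.distrib)

context
  fixes z :: "nat \<Rightarrow> 'L::field" and n :: nat
  assumes z_nonzero: "\<forall>i<n. z i \<noteq> 0"
begin

lemma laurent_nonzero: "laurent z n u \<noteq> 0"
  unfolding laurent_def using z_nonzero by simp

lemma laurent_add: "laurent z n (\<lambda>i. u i + v i) = laurent z n u * laurent z n v"
  unfolding laurent_def using z_nonzero by (simp add: power_int_add prod.distrib)

lemma laurent_power_int: "laurent z n u powi k = laurent z n (\<lambda>i. k * u i)"
  unfolding laurent_def by (simp add: prod_power_int_distrib power_int_mult[symmetric] mult.commute)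

lemma laurent_unit: "j < n \<Longrightarrow> laurent z n (\<lambda>i. if i = j then 1 else 0) = z j"
  unfolding laurent_def by (simp add: if_distrib[of "power_int _"] cong: if_cong)

lemma laurent_row_comb:
  fixes m :: nat
  shows "(\<Prod>l<m. laurent z n (b l) powi k l) = laurent z n (\<lambda>j. \<Sum>l<m. k l * b l j)"
proof (induction m)
  case 0
  then show ?case by (simp add: laurent_def)
next
  case (Suc m)
  then show ?case
    by (simp add: laurent_add laurent_power_int)
qed

lemma laurent_quasi_monomial_image:
  assumes s: "field_aut s" and sz: "\<forall>j<n. s (z j) = e j * laurent z n (\<lambda>i. M i j)"
  shows "s (laurent z n u) = (\<Prod>j<n. e j powi u j) * laurent z n (\<lambda>i. \<Sum>j<n. u j * M i j)"
proof -
  have "s (laurent z n u) = laurent (\<lambda>j. e j * laurent z n (\<lambda>i. M i j)) n u"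
    using sz unfolding laurent_field_aut[OF s] by (intro laurent_cong) auto
  also have "\<dots> = (\<Prod>j<n. e j powi u j) * laurent z n (\<lambda>i. \<Sum>j<n. u j * M i j)"
    by (simp add: laurent_scaled) (simp add: laurent_def laurent_row_comb[unfolded laurent_def])
  finally show ?thesis .
qed

end

lemma laurent_diagonal_image:
  assumes "field_aut t" and "\<forall>i<n. t (z i) = e i * z i"
  shows "t (laurent z n u) = (\<Prod>i<n. e i powi u i) * laurent z n u"
proof -
  have "laurent (\<lambda>i. t (z i)) n u = laurent (\<lambda>i. e i * z i) n u"
    using assms(2) by (intro laurent_cong) auto
  then show ?thesis
    by (simp add: laurent_field_aut[OF assms(1)] laurent_scaled)
qed

section \<open>Polynomial expressions\<close>

inductive_set polys :: "'L::field set \<Rightarrow> (nat \<Rightarrow> 'L) \<Rightarrow> nat \<Rightarrow> 'L set" for F z n where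
  polys_const: "c \<in> F \<Longrightarrow> c \<in> polys F z n"
| polys_var: "i < n \<Longrightarrow> z i \<in> polys F z n"
| polys_add: "p \<in> polys F z n \<Longrightarrow> q \<in> polys F z n \<Longrightarrow> p + q \<in> polys F z n"
| polys_mult: "p \<in> polys F z n \<Longrightarrow> q \<in> polys F z n \<Longrightarrow> p * q \<in> polys F z n"
| polys_uminus: "p \<in> polys F z n \<Longrightarrow> - p \<in> polys F z n"

definition poly_expansion :: "'L::field set \<Rightarrow> (nat \<Rightarrow> 'L) \<Rightarrow> nat \<Rightarrow> 'L
    \<Rightarrow> (nat \<Rightarrow> nat) set \<Rightarrow> ((nat \<Rightarrow> nat) \<Rightarrow> 'L) \<Rightarrow> bool" where
  "poly_expansion F z n p M c \<longleftrightarrow> finite M \<and> (\<forall>m\<in>M. \<forall>i\<ge>n. m i = 0) \<and> (\<forall>m\<in>M. c m \<in> F) \<and>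
     p = (\<Sum>m\<in>M. c m * (\<Prod>i<n. z i ^ m i))"

context
  fixes F :: "'L::field set" and z :: "nat \<Rightarrow> 'L" and n :: nat
  assumes F: "is_subfield F"
begin

lemma polys_1: "1 \<in> polys F z n"
  by (rule polys_const[OF subfield_1[OF F]])

lemma polys_prod: "(\<And>i. i \<in> A \<Longrightarrow> f i \<in> polys F z n) \<Longrightarrow> prod f A \<in> polys F z n"
  by (induction A rule: infinite_finite_induct) (auto intro: polys_1 polys_mult)

lemma is_subfield_fractions:
  "is_subfield {p / q | p q. p \<in> polys F z n \<and> q \<in> polys F z n \<and> q \<noteq> 0}" (is "is_subfield ?R")
  unfolding is_subfield_def
proof (intro conjI ballI)
  have in_R: "a \<in> ?R" if "a \<in> polys F z n" for a
    using that polys_1 by (intro CollectI exI[of _ a] exI[of _ 1]) simp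
  show "0 \<in> ?R"
    by (rule in_R[OF polys_const[OF subfield_0[OF F]]])
  show "1 \<in> ?R"
    by (rule in_R[OF polys_1])
next
  fix a b assume "a \<in> ?R" "b \<in> ?R"
  then obtain p q p' q' where pq: "p \<in> polys F z n" "q \<in> polys F z n" "q \<noteq> 0" "a = p / q"
    and pq': "p' \<in> polys F z n" "q' \<in> polys F z n" "q' \<noteq> 0" "b = p' / q'"
    by blast
  have "a + b = (p * q' + p' * q) / (q * q')" "a * b = (p * p') / (q * q')"
    "a - b = (p * q' + - (p' * q)) / (q * q')"
    using pq(3) pq'(3) unfolding pq(4) pq'(4) by (simp_all add: field_simps)
  then show "a + b \<in> ?R" "a * b \<in> ?R" "a - b \<in> ?R"
    using pq pq' by (fastforce intro: polys_add polys_mult polys_uminus)+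
next
  fix a assume "a \<in> ?R"
  then obtain p q where pq: "p \<in> polys F z n" "q \<in> polys F z n" "q \<noteq> 0" "a = p / q"
    by blast
  show "inverse a \<in> ?R"
  proof (cases "p = 0")
    case True
    then show ?thesis
      using pq polys_1 by (intro CollectI exI[of _ p] exI[of _ 1]) simp
  next
    case False
    then show ?thesis
      using pq by (intro CollectI exI[of _ q] exI[of _ p]) simp
  qed
qed

lemma field_gen_fractions:
  assumes "a \<in> field_gen F (z ` {..<n})"
  obtains p q where "p \<in> polys F z n" "q \<in> polys F z n" "q \<noteq> 0" "a = p / q"
proof -
  have "a \<in> polys F z n \<Longrightarrow> \<exists>p q. a = p / q \<and> p \<in> polys F z n \<and> q \<in> polys F z n \<and> q \<noteq> 0" for a
    using polys_1 by (intro exI[of _ a] exI[of _ 1]) simp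
  then have "field_gen F (z ` {..<n}) \<subseteq> {p / q | p q. p \<in> polys F z n \<and> q \<in> polys F z n \<and> q \<noteq> 0}"
    by (intro field_gen_least is_subfield_fractions) (auto intro: polys_const polys_var)
  then show ?thesis
    using assms that by blast
qed

lemma poly_expansion_add:
  assumes p: "poly_expansion F z n p M c" and q: "poly_expansion F z n q M' c'"
  shows "poly_expansion F z n (p + q) (M \<union> M')
     (\<lambda>m. (if m \<in> M then c m else 0) + (if m \<in> M' then c' m else 0))"
proof -
  have fin: "finite (M \<union> M')"
    using p q by (simp add: poly_expansion_def)
  have "p = (\<Sum>m\<in>M \<union> M'. (if m \<in> M then c m else 0) * (\<Prod>i<n. z i ^ m i))"
    "q = (\<Sum>m\<in>M \<union> M'. (if m \<in> M' then c' m else 0) * (\<Prod>i<n. z i ^ m i))"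
    using p q unfolding poly_expansion_def
    by (auto intro!: sum.mono_neutral_cong_left[OF fin])
  then show ?thesis
    using p q fin by (auto simp: poly_expansion_def distrib_right sum.distrib
        intro: subfield_add[OF F] subfield_0[OF F])
qed

lemma poly_expansion_mult:
  assumes p: "poly_expansion F z n p M c" and q: "poly_expansion F z n q M' c'"
  shows "\<exists>T d. poly_expansion F z n (p * q) T d"
proof -
  define g where "g = (\<lambda>(m::nat\<Rightarrow>nat, m'). (\<lambda>i. m i + m' i))"
  define T where "T = g ` (M \<times> M')"
  define d where "d u = (\<Sum>w\<in>{w \<in> M \<times> M'. g w = u}. c (fst w) * c' (snd w))" for u
  have fin: "finite (M \<times> M')" "finite T"
    using p q by (simp_all add: poly_expansion_def T_def)
  have mono_g: "(\<Prod>i<n. z i ^ g w i) = (\<Prod>i<n. z i ^ fst w i) * (\<Prod>i<n. z i ^ snd w i)" for w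
    by (simp add: g_def case_prod_beta power_add prod.distrib)
  have "p * q = (\<Sum>m\<in>M. \<Sum>m'\<in>M'. (c m * (\<Prod>i<n. z i ^ m i)) * (c' m' * (\<Prod>i<n. z i ^ m' i)))"
    using p q by (simp add: poly_expansion_def sum_product)
  also have "\<dots> = (\<Sum>w\<in>M \<times> M'. c (fst w) * c' (snd w) * (\<Prod>i<n. z i ^ g w i))"
    by (simp add: sum.cartesian_product mono_g case_prod_beta mult_ac)
  also have "\<dots> = (\<Sum>u\<in>T. \<Sum>w\<in>{w \<in> M \<times> M'. g w = u}. c (fst w) * c' (snd w) * (\<Prod>i<n. z i ^ g w i))"
    by (rule sum.group[symmetric, OF fin]) (simp add: T_def)
  also have "\<dots> = (\<Sum>u\<in>T. d u * (\<Prod>i<n. z i ^ u i))"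
    by (auto simp: d_def sum_distrib_right intro!: sum.cong)
  finally have "p * q = (\<Sum>u\<in>T. d u * (\<Prod>i<n. z i ^ u i))" .
  moreover have "\<forall>u\<in>T. d u \<in> F"
    using p q unfolding d_def by (auto simp: poly_expansion_def intro!: subfield_sum[OF F] subfield_mult[OF F])
  moreover have "\<forall>u\<in>T. \<forall>i\<ge>n. u i = 0"
    using p q by (auto simp: poly_expansion_def T_def g_def)
  ultimately show ?thesis
    using fin unfolding poly_expansion_def by blast
qed

lemma polys_expansion: "p \<in> polys F z n \<Longrightarrow> \<exists>M c. poly_expansion F z n p M c"
proof (induction p rule: polys.induct)
  case (polys_const c)
  then have "poly_expansion F z n c {\<lambda>_. 0} (\<lambda>_. c)"
    by (simp add: poly_expansion_def)
  then show ?case by blast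
next
  case (polys_var i)
  define m :: "nat \<Rightarrow> nat" where "m = (\<lambda>j. if j = i then 1 else 0)"
  have "(\<Prod>j<n. z j ^ m j) = z i"
    using polys_var by (simp add: m_def if_distrib[of "power _"] cong: if_cong)
  then have "poly_expansion F z n (z i) {m} (\<lambda>_. 1)"
    using polys_var subfield_1[OF F] by (auto simp: poly_expansion_def m_def)
  then show ?case by blast
next
  case (polys_add p q)
  then show ?case
    by (blast intro: poly_expansion_add)
next
  case (polys_mult p q)
  then show ?case
    by (blast intro: poly_expansion_mult)
next
  case (polys_uminus p)
  then obtain M c where "poly_expansion F z n p M c"
    by blast
  then have "poly_expansion F z n (- p) M (\<lambda>m. - c m)"
    by (auto simp: poly_expansion_def sum_negf intro: subfield_uminus[OF F])
  then show ?case by blast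
qed

end

lemma polys_image:
  assumes t: "field_aut t" "t ` F \<subseteq> F" and diag: "\<forall>i<n. \<exists>c\<in>F. t (z i) = c * z i"
  shows "p \<in> polys F z n \<Longrightarrow> t p \<in> polys F z n"
proof (induction p rule: polys.induct)
  case (polys_var i)
  then show ?case
    using diag by (metis polys.polys_const polys.polys_mult polys.polys_var)
qed (use t in \<open>auto simp: field_aut_add field_aut_mult field_aut_uminus intro: polys.intros\<close>)

section \<open>Algebraically independent generators\<close>

lemma alg_indepD:
  assumes "alg_indep F z n" "finite M" "\<forall>m\<in>M. \<forall>i\<ge>n. m i = 0" "\<forall>m\<in>M. c m \<in> F"
    "(\<Sum>m\<in>M. c m * (\<Prod>i<n. z i ^ m i)) = 0" "m \<in> M"
  shows "c m = 0"
  using assms(1)[unfolded alg_indep_def, rule_format, of M c] assms(2-6) by blast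

lemma exponents_bounded:
  fixes \<phi> :: "'a \<Rightarrow> nat \<Rightarrow> int"
  assumes M: "finite M"
  shows "\<exists>S. \<forall>m\<in>M. \<forall>j<n. \<bar>\<phi> m j\<bar> \<le> S"
proof (intro exI ballI allI impI)
  fix m j assume "m \<in> M" "j < n"
  then have "\<bar>\<phi> m j\<bar> \<le> (\<Sum>j<n. \<bar>\<phi> m j\<bar>)"
    by (intro member_le_sum) auto
  also have "\<dots> \<le> (\<Sum>m\<in>M. \<Sum>j<n. \<bar>\<phi> m j\<bar>)"
    using \<open>m \<in> M\<close> M by (intro member_le_sum) (auto intro: sum_nonneg)
  finally show "\<bar>\<phi> m j\<bar> \<le> (\<Sum>m\<in>M. \<Sum>j<n. \<bar>\<phi> m j\<bar>)" .
qed

context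
  fixes F :: "'L::field set" and z :: "nat \<Rightarrow> 'L" and n :: nat
  assumes F: "is_subfield F" and indep: "alg_indep F z n"
begin

lemma alg_indep_nonzero: "\<forall>i<n. z i \<noteq> 0"
proof (intro allI impI notI)
  fix i assume i: "i < n" and "z i = 0"
  define m :: "nat \<Rightarrow> nat" where "m = (\<lambda>j. if j = i then 1 else 0)"
  have "(\<Prod>j<n. z j ^ m j) = 0"
    using i \<open>z i = 0\<close> by (simp add: m_def if_distrib[of "power _"] cong: if_cong)
  then have "(1 :: 'L) = 0"
    using subfield_1[OF F] i by (intro alg_indepD[OF indep, of "{m}" "\<lambda>_. 1" m]) (simp_all add: m_def)
  then show False
    by simp
qed

text \<open>Multiplying by a high power of \<open>z\<^sub>1\<cdots>z\<^sub>n\<close> turns Laurent monomials into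
  monomials, to which algebraic independence applies.\<close>
lemma laurent_independent:
  assumes M: "finite M" and d: "\<forall>m\<in>M. d m \<in> F"
    and distinct: "\<forall>m\<in>M. \<forall>m'\<in>M. (\<forall>j<n. \<phi> m j = \<phi> m' j) \<longrightarrow> m = m'"
    and sum0: "(\<Sum>m\<in>M. d m * laurent z n (\<phi> m)) = 0"
  shows "\<forall>m\<in>M. d m = 0"
proof -
  obtain S where bound: "\<And>m j. m \<in> M \<Longrightarrow> j < n \<Longrightarrow> \<bar>\<phi> m j\<bar> \<le> S"
    using exponents_bounded[OF M] by blast
  define \<psi> where "\<psi> m = (\<lambda>j. if j < n then nat (\<phi> m j + S) else 0)" for m
  have shift: "laurent z n (\<phi> m) * laurent z n (\<lambda>j. S) = (\<Prod>i<n. z i ^ \<psi> m i)" if "m \<in> M" for m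
  proof -
    have "laurent z n (\<phi> m) * laurent z n (\<lambda>j. S) = laurent z n (\<lambda>j. int (\<psi> m j))"
      unfolding laurent_add[OF alg_indep_nonzero, symmetric]
      using bound[OF that] by (intro laurent_cong refl) (force simp: \<psi>_def abs_le_iff)
    then show ?thesis
      by (simp add: laurent_of_nat)
  qed
  have inj: "inj_on \<psi> M"
  proof (rule inj_onI)
    fix m m' assume m: "m \<in> M" "m' \<in> M" "\<psi> m = \<psi> m'"
    have "\<phi> m j = \<phi> m' j" if "j < n" for j
      using fun_cong[OF m(3), of j] bound[OF m(1) that] bound[OF m(2) that] that
      by (simp add: \<psi>_def abs_le_iff eq_nat_nat_iff)
    then show "m = m'"
      using distinct m by blast
  qed
  define c where "c u = d (the_inv_into M \<psi> u)" for u
  have "(\<Sum>u\<in>\<psi> ` M. c u * (\<Prod>i<n. z i ^ u i)) = (\<Sum>m\<in>M. d m * laurent z n (\<phi> m)) * laurent z n (\<lambda>j. S)"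
    by (simp add: sum.reindex[OF inj] c_def the_inv_into_f_f[OF inj] sum_distrib_right shift mult.assoc)
  then have "(\<Sum>u\<in>\<psi> ` M. c u * (\<Prod>i<n. z i ^ u i)) = 0"
    by (simp add: sum0)
  moreover have "\<forall>u\<in>\<psi> ` M. \<forall>i\<ge>n. u i = 0"
    by (simp add: \<psi>_def)
  moreover have "\<forall>u\<in>\<psi> ` M. c u \<in> F"
    using d by (simp add: c_def the_inv_into_f_f[OF inj])
  ultimately have "c (\<psi> m) = 0" if "m \<in> M" for m
    using M that by (intro alg_indepD[OF indep, of "\<psi> ` M" c "\<psi> m"]) auto
  then show ?thesis
    by (simp add: c_def the_inv_into_f_f[OF inj])
qed

lemma laurent_exponents_unique:
  assumes "c \<in> F" "c \<noteq> 0" "c' \<in> F" "c * laurent z n u = c' * laurent z n v"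
  shows "\<forall>j<n. u j = v j"
proof (rule ccontr)
  assume differ: "\<not> (\<forall>j<n. u j = v j)"
  have "\<forall>b\<in>UNIV. (if b then c else - c') = 0"
    by (rule laurent_independent[where \<phi> = "\<lambda>b. if b then u else v"])
      (use assms differ subfield_uminus[OF F] in \<open>auto simp: UNIV_bool\<close>)
  then show False
    using \<open>c \<noteq> 0\<close> by (metis (full_types) UNIV_I)
qed

lemma poly_expansion_terms_fixed:
  assumes t: "field_aut t" "t ` F \<subseteq> F" and diag: "\<forall>i<n. \<exists>e\<in>F. t (z i) = e * z i"
    and p: "poly_expansion F z n p M c" and fixed: "t p = p"
  shows "\<forall>m\<in>M. t (c m * (\<Prod>i<n. z i ^ m i)) = c m * (\<Prod>i<n. z i ^ m i)"
proof -
  obtain e where e: "\<forall>i<n. e i \<in> F \<and> t (z i) = e i * z i"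
    using diag by metis
  define f where "f m = (\<Prod>i<n. e i ^ m i)" for m
  have tz: "t (\<Prod>i<n. z i ^ m i) = f m * (\<Prod>i<n. z i ^ m i)" for m
    using laurent_diagonal_image[OF t(1), where z = z and e = e and u = "\<lambda>i. int (m i)"] e
    by (simp add: laurent_of_nat f_def)
  define d where "d m = t (c m) * f m - c m" for m
  have "(\<Sum>m\<in>M. d m * (\<Prod>i<n. z i ^ m i)) = t p - p"
    using p unfolding poly_expansion_def d_def
    by (simp add: field_aut_sum[OF t(1)] field_aut_mult[OF t(1)] tz left_diff_distrib
        sum_subtractf mult.assoc)
  moreover have "\<forall>m\<in>M. d m \<in> F"
    using p t e unfolding poly_expansion_def d_def f_def
    by (auto intro!: subfield_diff[OF F] subfield_mult[OF F] subfield_prod[OF F] subfield_power[OF F])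
  ultimately have "d m = 0" if "m \<in> M" for m
    using p fixed that unfolding poly_expansion_def by (intro alg_indepD[OF indep, of M d m]) auto
  then show ?thesis
    by (simp add: field_aut_mult[OF t(1)] tz d_def mult.assoc)
qed

end

section \<open>Triangular bases of integer lattices\<close>

lemma triangular_row_comb_inj:
  fixes b :: "nat \<Rightarrow> nat \<Rightarrow> int"
  assumes tri: "\<forall>i<n. b i i \<noteq> 0 \<and> (\<forall>j<i. b i j = 0)"
    and eq: "\<forall>j<n. (\<Sum>l<n. u l * b l j) = (\<Sum>l<n. v l * b l j)"
  shows "\<forall>l<n. u l = v l"
proof -
  have "j < n \<longrightarrow> u j = v j" for j
  proof (induction j rule: less_induct)
    case (less j)
    show ?case
    proof
      assume j: "j < n"
      have "(\<Sum>l\<in>{..<n} - {j}. (u l - v l) * b l j) = 0"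
      proof (intro sum.neutral ballI)
        fix l assume "l \<in> {..<n} - {j}"
        then show "(u l - v l) * b l j = 0"
          using less tri by (cases "l < j") (auto simp: linorder_neq_iff)
      qed
      moreover have "(\<Sum>l<n. (u l - v l) * b l j) = 0"
        using eq j by (simp add: left_diff_distrib sum_subtractf)
      ultimately have "(u j - v j) * b j j = 0"
        using j by (simp add: sum.remove)
      then show "u j = v j"
        using tri j by simp
    qed
  qed
  then show ?thesis by blast
qed

context
  fixes L :: "(nat \<Rightarrow> int) set" and n :: nat
  assumes comb_closed: "\<And>m m' q. m \<in> L \<Longrightarrow> m' \<in> L \<Longrightarrow> (\<lambda>j. m j + q * m' j) \<in> L"
    and pivot_exists: "\<And>i. i < n \<Longrightarrow> \<exists>m\<in>L. (\<forall>j<i. m j = 0) \<and> 0 < m i"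
begin

lemma minimal_pivot:
  assumes i: "i < n"
  shows "\<exists>v. v \<in> L \<and> (\<forall>j<i. v j = 0) \<and> 0 < v i \<and> (\<forall>m\<in>L. (\<forall>j<i. m j = 0) \<longrightarrow> v i dvd m i)"
proof -
  define P where "P d \<longleftrightarrow> 0 < d \<and> (\<exists>m\<in>L. (\<forall>j<i. m j = 0) \<and> m i = int d)" for d
  have "\<exists>d. P d"
    using pivot_exists[OF i] unfolding P_def by (metis zero_less_imp_eq_int)
  then have least: "P (LEAST d. P d)" "\<And>d. P d \<Longrightarrow> (LEAST d. P d) \<le> d"
    by (auto intro: LeastI_ex Least_le)
  then obtain v where v: "v \<in> L" "\<forall>j<i. v j = 0" "v i = int (LEAST d. P d)" "0 < v i"
    unfolding P_def by auto
  have "v i dvd m i" if m: "m \<in> L" "\<forall>j<i. m j = 0" for m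
  proof (rule ccontr)
    assume "\<not> v i dvd m i"
    then have r: "0 < m i mod v i" "m i mod v i < v i"
      using v(4) by (simp add: dvd_eq_mod_eq_0 order_less_le, simp)
    have "(\<lambda>j. m j + (- (m i div v i)) * v j) \<in> L"
      by (rule comb_closed[OF m(1) v(1)])
    moreover have "m i + (- (m i div v i)) * v i = m i mod v i"
      by (simp add: minus_div_mult_eq_mod[symmetric] mult.commute)
    ultimately have "P (nat (m i mod v i))"
      unfolding P_def using r m(2) v(2) by (intro conjI bexI[of _ "\<lambda>j. m j + (- (m i div v i)) * v j"]) auto
    then have "(LEAST d. P d) \<le> nat (m i mod v i)"
      by (rule least(2))
    then have "v i \<le> m i mod v i"
      using v(3) r(1) by (simp add: le_nat_iff)
    then show False
      using r by simp
  qed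
  then show ?thesis
    using v(1,2,4) by blast
qed

lemma pivot_basis_spans:
  assumes b: "\<forall>i<n. b i \<in> L \<and> (\<forall>j<i. b i j = 0) \<and> (\<forall>m\<in>L. (\<forall>j<i. m j = 0) \<longrightarrow> b i i dvd m i)"
    and "i \<le> n" and "m \<in> L" and "\<forall>j<i. m j = 0"
  shows "\<exists>k. \<forall>j<n. m j = (\<Sum>l<n. k l * b l j)"
  using assms(2-)
proof (induction i arbitrary: m rule: inc_induct)
  case base
  then show ?case
    by (intro exI[of _ "\<lambda>_. 0"]) simp
next
  case (step i)
  have bi: "b i \<in> L" "\<forall>j<i. b i j = 0" "b i i dvd m i"
    using b step by auto
  define q where "q = m i div b i i"
  define m' where "m' j = m j + (- q) * b i j" for j
  have "m' \<in> L"
    unfolding m'_def using step.prems(1) bi(1) by (rule comb_closed)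
  moreover have "\<forall>j<Suc i. m' j = 0"
    using step.prems(2) bi unfolding m'_def q_def by (auto simp: less_Suc_eq)
  ultimately obtain k where k: "\<forall>j<n. m' j = (\<Sum>l<n. k l * b l j)"
    using step.IH by blast
  have comb: "m j = (\<Sum>l<n. (k l + (if l = i then q else 0)) * b l j)" if "j < n" for j
    using k[rule_format, OF that] \<open>i < n\<close>
    by (simp add: m'_def distrib_right sum.distrib if_distrib[where f = "\<lambda>x. x * _"] cong: if_cong)
  show ?case
    by (intro exI[of _ "\<lambda>l. k l + (if l = i then q else 0)"] allI impI comb)
qed

lemma triangular_basis_exists:
  "\<exists>b. (\<forall>i<n. b i \<in> L \<and> b i i \<noteq> 0 \<and> (\<forall>j<i. b i j = 0)) \<and>
       (\<forall>m\<in>L. \<exists>k. \<forall>j<n. m j = (\<Sum>l<n. k l * b l j))"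
proof -
  have "\<forall>i\<in>{..<n}. \<exists>v. v \<in> L \<and> (\<forall>j<i. v j = 0) \<and> 0 < v i \<and>
      (\<forall>m\<in>L. (\<forall>j<i. m j = 0) \<longrightarrow> v i dvd m i)"
    by (intro ballI minimal_pivot) simp
  then have "\<exists>b. \<forall>i\<in>{..<n}. b i \<in> L \<and> (\<forall>j<i. b i j = 0) \<and> 0 < b i i \<and>
      (\<forall>m\<in>L. (\<forall>j<i. m j = 0) \<longrightarrow> b i i dvd m i)"
    by (rule bchoice)
  then obtain b where b: "\<forall>i\<in>{..<n}. b i \<in> L \<and> (\<forall>j<i. b i j = 0) \<and> 0 < b i i \<and>
      (\<forall>m\<in>L. (\<forall>j<i. m j = 0) \<longrightarrow> b i i dvd m i)" ..
  have "b i \<in> L \<and> b i i \<noteq> 0 \<and> (\<forall>j<i. b i j = 0)" if "i < n" for i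
    using b[rule_format, of i] that by simp
  moreover have "\<exists>k. \<forall>j<n. m j = (\<Sum>l<n. k l * b l j)" if "m \<in> L" for m
    using b that by (intro pivot_basis_spans[of b 0]) auto
  ultimately show ?thesis
    by blast
qed

end

lemma matrix_fixing_full_rank_rows_eq_id:
  fixes b M :: "nat \<Rightarrow> nat \<Rightarrow> int"
  assumes fixes_rows: "\<forall>r<n. \<forall>i<n. (\<Sum>t<n. b r t * M i t) = b r i"
    and spans: "\<forall>l<n. \<exists>k. \<forall>j<n. c * (if j = l then 1 else 0) = (\<Sum>r<n. k r * b r j)"
    and "c \<noteq> 0" and i: "i < n" and l: "l < n"
  shows "M i l = (if i = l then 1 else 0)"
proof -
  obtain k where k: "\<forall>j<n. c * (if j = l then 1 else 0) = (\<Sum>r<n. k r * b r j)"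
    using spans l by blast
  have "c * M i l = (\<Sum>t<n. (c * (if t = l then 1 else 0)) * M i t)"
    using l by (simp add: if_distrib[where f = "\<lambda>x. _ * x"] if_distrib[where f = "\<lambda>x. x * _"] cong: if_cong)
  also have "\<dots> = (\<Sum>t<n. (\<Sum>r<n. k r * b r t) * M i t)"
    using k by (intro sum.cong) auto
  also have "\<dots> = (\<Sum>r<n. k r * (\<Sum>t<n. b r t * M i t))"
    unfolding sum_distrib_left sum_distrib_right mult.assoc by (rule sum.swap)
  also have "\<dots> = (\<Sum>r<n. k r * b r i)"
    using fixes_rows i by (intro sum.cong) auto
  also have "\<dots> = c * (if i = l then 1 else 0)"
    using k i by simp
  finally show ?thesis
    using \<open>c \<noteq> 0\<close> by simp
qed

section \<open>The subgroup acting diagonally on the variables\<close>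

locale qm_setting =
  fixes K k :: "'L::field set" and x :: "nat \<Rightarrow> 'L" and n :: nat and G :: "('L \<Rightarrow> 'L) set"
  assumes K: "is_subfield K"
    and x_indep: "alg_indep K x n"
    and x_gen: "field_gen K (x ` {..<n}) = UNIV"
    and G_finite: "finite G"
    and G_group: "aut_group G"
    and G_qm: "qm_action G k K x n"
begin

lemma x_nonzero: "\<forall>i<n. x i \<noteq> 0"
  by (rule alg_indep_nonzero[OF K x_indep])

lemma G_aut: "s \<in> G \<Longrightarrow> field_aut s"
  using G_group by (simp add: aut_group_def)
lemma G_inv: "s \<in> G \<Longrightarrow> inv s \<in> G"
  using G_group by (simp add: aut_group_def)
lemma G_comp: "s \<in> G \<Longrightarrow> t \<in> G \<Longrightarrow> s \<circ> t \<in> G"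
  using G_group by (simp add: aut_group_def)
lemma G_K: "s \<in> G \<Longrightarrow> a \<in> K \<Longrightarrow> s a \<in> K"
  using G_qm by (auto simp: qm_action_def)

lemma G_quasi_monomial:
  assumes "s \<in> G"
  obtains M e where "\<forall>j<n. e j \<in> K \<and> e j \<noteq> 0 \<and> s (x j) = e j * laurent x n (\<lambda>i. M i j)"
proof -
  obtain M where "qm_matrix s K x n M"
    using G_qm assms by (auto simp: qm_action_def)
  then have "\<forall>j<n. \<exists>c. c \<in> K \<and> c \<noteq> 0 \<and> s (x j) = c * laurent x n (\<lambda>i. M i j)"
    by (simp add: qm_matrix_def lmon_eq_laurent)
  then show ?thesis
    using that by metis
qed

definition N :: "('L \<Rightarrow> 'L) set" where
  "N = {s \<in> G. \<forall>j<n. \<exists>c\<in>K. s (x j) = c * x j}"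

lemma N_subset: "N \<subseteq> G"
  by (auto simp: N_def)

lemma N_aut: "t \<in> N \<Longrightarrow> field_aut t"
  using G_aut N_subset by blast

lemma N_K: "t \<in> N \<Longrightarrow> t ` K \<subseteq> K"
  using G_K[of t] N_subset by auto

lemma N_diagonal:
  assumes t: "t \<in> N"
  obtains e where "\<forall>j<n. e j \<in> K \<and> e j \<noteq> 0 \<and> t (x j) = e j * x j"
proof -
  have "\<forall>j\<in>{..<n}. \<exists>c. c \<in> K \<and> t (x j) = c * x j"
    using t unfolding N_def by blast
  then obtain e where e: "\<forall>j\<in>{..<n}. e j \<in> K \<and> t (x j) = e j * x j"
    by metis
  have "e j \<noteq> 0" if "j < n" for j
    using e x_nonzero field_aut_eq_0_iff[OF N_aut[OF t], of "x j"] that by auto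
  then show ?thesis
    using e by (intro that[of e]) auto
qed

lemma N_scales_laurent:
  assumes t: "t \<in> N"
  shows "\<exists>c\<in>K. c \<noteq> 0 \<and> t (laurent x n u) = c * laurent x n u"
proof -
  obtain e where e: "\<forall>j<n. e j \<in> K \<and> e j \<noteq> 0 \<and> t (x j) = e j * x j"
    using N_diagonal[OF t] by blast
  then show ?thesis
    using laurent_diagonal_image[OF N_aut[OF t], of n x e u]
    by (intro bexI[of _ "\<Prod>i<n. e i powi u i"])
      (auto intro: subfield_prod[OF K] subfield_power_int[OF K])
qed

lemma N_id: "id \<in> N"
  using G_group subfield_1[OF K] by (auto simp: N_def aut_group_def)

lemma N_comp:
  assumes s: "s \<in> N" and t: "t \<in> N"
  shows "s \<circ> t \<in> N"
proof -
  have "\<exists>c\<in>K. s (t (x j)) = c * x j" if "j < n" for j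
  proof -
    obtain c where "c \<in> K" "t (x j) = c * x j"
      using t \<open>j < n\<close> by (auto simp: N_def)
    moreover obtain d where "d \<in> K" "s (x j) = d * x j"
      using s \<open>j < n\<close> by (auto simp: N_def)
    ultimately show ?thesis
      using N_K[OF s] field_aut_mult[OF N_aut[OF s]] by (auto intro!: bexI[of _ "s c * d"] subfield_mult[OF K])
  qed
  then show ?thesis
    using G_comp N_subset s t by (auto simp: N_def)
qed

lemma N_inv:
  assumes s: "s \<in> N"
  shows "inv s \<in> N"
proof -
  have sG: "s \<in> G"
    using s N_subset by blast
  have "\<exists>c\<in>K. inv s (x j) = c * x j" if j: "j < n" for j
  proof -
    obtain c where c: "c \<in> K" "c \<noteq> 0" "s (x j) = c * x j"
      using N_diagonal[OF s] j by metis
    have "x j = inv s c * inv s (x j)"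
      using c(3) aut_group_inv_apply[OF G_group sG, of "x j"]
      by (metis G_aut G_inv field_aut_mult sG)
    moreover have "inv s c \<noteq> 0"
      using c(2) G_aut[OF G_inv[OF sG]] field_aut_eq_0_iff by blast
    ultimately have "inv s (x j) = inverse (inv s c) * x j"
      by (simp add: field_simps)
    then show ?thesis
      using G_K[OF G_inv[OF sG] c(1)] by (blast intro: subfield_inverse[OF K])
  qed
  then show ?thesis
    using G_inv[OF sG] by (simp add: N_def)
qed

lemma N_conj:
  assumes s: "s \<in> G" and t: "t \<in> N"
  shows "s \<circ> t \<circ> inv s \<in> N"
proof -
  have "\<exists>c\<in>K. s (t (inv s (x j))) = c * x j" if j: "j < n" for j
  proof -
    obtain M e where Me: "\<forall>j<n. e j \<in> K \<and> e j \<noteq> 0 \<and> inv s (x j) = e j * laurent x n (\<lambda>i. M i j)"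
      using G_quasi_monomial[OF G_inv[OF s]] by blast
    obtain d where d: "d \<in> K" "t (laurent x n (\<lambda>i. M i j)) = d * laurent x n (\<lambda>i. M i j)"
      using N_scales_laurent[OF t] by blast
    have "t (inv s (x j)) = (t (e j) * d / e j) * inv s (x j)"
      using Me j d(2) by (simp add: field_aut_mult[OF N_aut[OF t]])
    then have "s (t (inv s (x j))) = s (t (e j) * d / e j) * x j"
      by (simp only: field_aut_mult[OF G_aut[OF s]] aut_group_apply_inv[OF G_group s])
    moreover have "s (t (e j) * d / e j) \<in> K"
      using Me j d(1) N_K[OF t] by (intro G_K[OF s] subfield_divide[OF K] subfield_mult[OF K]) auto
    ultimately show ?thesis
      by blast
  qed
  then show ?thesis
    using G_comp G_inv N_subset s t by (auto simp: N_def)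
qed

lemma normal_subgroup_N: "normal_subgroup N G"
  by (simp add: normal_subgroup_def aut_group_def N_subset N_aut N_id N_comp N_inv N_conj)

lemma N_finite: "finite N"
  using G_finite N_subset finite_subset by blast

lemma N_group: "aut_group N"
  using normal_subgroup_N by (simp add: normal_subgroup_def)

lemma G_preserves_fixed_N: "s \<in> G \<Longrightarrow> s ` S \<subseteq> S \<Longrightarrow> s ` fixed S N \<subseteq> fixed S N"
  by (rule normal_subgroup_fixed_image[OF G_group normal_subgroup_N])

lemma N_fixes_UNIV_image: "s \<in> G \<Longrightarrow> s ` fixed UNIV N \<subseteq> fixed UNIV N"
  using G_preserves_fixed_N[of s UNIV] by simp

lemma purely_qm_N_fixes_x:
  assumes p: "purely_qm G x n" and t: "t \<in> N" and i: "i < n"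
  shows "t (x i) = x i"
proof -
  obtain A where A: "\<forall>j<n. t (x j) = lmon x n A j"
    using p t N_subset unfolding purely_qm_def by blast
  obtain c where c: "c \<in> K" "t (x i) = c * x i"
    using t i unfolding N_def by blast
  have "1 * laurent x n (\<lambda>j. A j i) = c * laurent x n (\<lambda>j. if j = i then 1 else 0)"
    using A c i laurent_unit[OF x_nonzero i] by (simp add: lmon_eq_laurent)
  then have "\<forall>j<n. A j i = (if j = i then 1 else 0)"
    by (rule laurent_exponents_unique[OF K x_indep subfield_1[OF K] one_neq_zero c(1)])
  then show ?thesis
    using A i laurent_unit[OF x_nonzero i] by (simp add: lmon_eq_laurent cong: laurent_cong)
qed

end

section \<open>Invariant Laurent monomials and invariant fractions\<close>

context qm_setting
begin

definition invariant_exponents :: "(nat \<Rightarrow> int) set" where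
  "invariant_exponents =
     {m. \<exists>c\<in>K. c \<noteq> 0 \<and> (\<forall>t\<in>N. t (c * laurent x n m) = c * laurent x n m)}"

lemma invariant_exponents_comb:
  assumes m: "m \<in> invariant_exponents" and m': "m' \<in> invariant_exponents"
  shows "(\<lambda>j. m j + q * m' j) \<in> invariant_exponents"
proof -
  obtain c where c: "c \<in> K" "c \<noteq> 0" "\<forall>t\<in>N. t (c * laurent x n m) = c * laurent x n m"
    using m by (auto simp: invariant_exponents_def)
  obtain c' where c': "c' \<in> K" "c' \<noteq> 0" "\<forall>t\<in>N. t (c' * laurent x n m') = c' * laurent x n m'"
    using m' by (auto simp: invariant_exponents_def)
  have eq: "(c * c' powi q) * laurent x n (\<lambda>j. m j + q * m' j) = (c * laurent x n m) * (c' * laurent x n m') powi q"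
    by (simp add: laurent_add[OF x_nonzero] laurent_power_int[OF x_nonzero, symmetric]
        power_int_mult_distrib mult_ac)
  have "\<forall>t\<in>N. t ((c * c' powi q) * laurent x n (\<lambda>j. m j + q * m' j)) = (c * c' powi q) * laurent x n (\<lambda>j. m j + q * m' j)"
    using c(3) c'(3) unfolding eq by (simp add: field_aut_mult[OF N_aut] field_aut_power_int[OF N_aut])
  moreover have "c * c' powi q \<in> K" "c * c' powi q \<noteq> 0"
    using c c' by (auto intro: subfield_mult[OF K] subfield_power_int[OF K])
  ultimately show ?thesis
    unfolding invariant_exponents_def by blast
qed

text \<open>The norm \<open>\<Prod>\<^sub>t\<^sub>\<in>\<^sub>N t(x\<^sub>l)\<close> is an invariant multiple of \<open>x\<^sub>l\<^bsup>|N|\<^esup>\<close>.\<close>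
lemma card_N_unit_invariant:
  assumes l: "l < n"
  shows "(\<lambda>i. int (card N) * (if i = l then 1 else 0)) \<in> invariant_exponents"
proof -
  have "\<forall>t\<in>N. \<exists>e. e \<in> K \<and> e \<noteq> 0 \<and> t (x l) = e * x l"
    using N_diagonal l by metis
  then obtain e where e: "\<forall>t\<in>N. e t \<in> K \<and> e t \<noteq> 0 \<and> t (x l) = e t * x l"
    by metis
  have "laurent x n (\<lambda>i. int (card N) * (if i = l then 1 else 0)) = x l ^ card N"
    using laurent_power_int[OF x_nonzero, symmetric] laurent_unit[OF x_nonzero l] by simp
  moreover have "(\<Prod>t\<in>N. t (x l)) = (\<Prod>t\<in>N. e t * x l)"
    using e by (intro prod.cong) auto
  moreover have "\<dots> = (\<Prod>t\<in>N. e t) * x l ^ card N"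
    by (simp add: prod.distrib)
  moreover have "\<forall>t\<in>N. t (\<Prod>t\<in>N. t (x l)) = (\<Prod>t\<in>N. t (x l))"
    using aut_group_prod_orbit_fixed[OF N_group _ N_finite] by blast
  moreover have "(\<Prod>t\<in>N. e t) \<in> K" "(\<Prod>t\<in>N. e t) \<noteq> 0"
    using e N_finite by (auto intro: subfield_prod[OF K])
  ultimately show ?thesis
    unfolding invariant_exponents_def by auto
qed

lemma invariant_triangular_basis:
  "\<exists>b. (\<forall>i<n. b i \<in> invariant_exponents \<and> b i i \<noteq> 0 \<and> (\<forall>j<i. b i j = 0)) \<and>
       (\<forall>m\<in>invariant_exponents. \<exists>k. \<forall>j<n. m j = (\<Sum>l<n. k l * b l j))"
proof (rule triangular_basis_exists)
  show "(\<lambda>j. m j + q * m' j) \<in> invariant_exponents"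
    if "m \<in> invariant_exponents" "m' \<in> invariant_exponents" for m m' q
    using that by (rule invariant_exponents_comb)
  have "card N > 0"
    using N_finite N_group by (auto simp: aut_group_def card_gt_0_iff)
  show "\<exists>m\<in>invariant_exponents. (\<forall>j<i. m j = 0) \<and> 0 < m i" if "i < n" for i
    using \<open>card N > 0\<close> by (intro bexI[OF _ card_N_unit_invariant[OF that]]) simp
qed

lemma N_polys:
  assumes "t \<in> N" and "p \<in> polys K x n"
  shows "t p \<in> polys K x n"
  by (rule polys_image[OF N_aut[OF assms(1)] N_K[OF assms(1)] _ assms(2)])
    (use assms(1) in \<open>auto simp: N_def\<close>)

lemma fixed_N_fraction:
  assumes f: "f \<in> fixed UNIV N"
  obtains P Q where "P \<in> polys K x n" "Q \<in> polys K x n" "Q \<noteq> 0"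
    "\<forall>t\<in>N. t P = P" "\<forall>t\<in>N. t Q = Q" "f = P / Q"
proof -
  obtain p q where pq: "p \<in> polys K x n" "q \<in> polys K x n" "q \<noteq> 0" "f = p / q"
    using field_gen_fractions[OF K, of f x n] x_gen by auto
  define R where "R = (\<Prod>t\<in>N - {id}. t q)"
  have id: "id \<in> N"
    using N_group by (simp add: aut_group_def)
  have norm: "(\<Prod>t\<in>N. t q) = q * R"
    unfolding R_def using prod.remove[OF N_finite id, of "\<lambda>t. t q"] by simp
  have "(\<Prod>t\<in>N. t q) \<noteq> 0"
    using N_finite pq(3) by (simp add: field_aut_eq_0_iff[OF N_aut])
  then have "R \<noteq> 0" and f_eq: "f = (p * R) / (\<Prod>t\<in>N. t q)"
    using pq(3,4) unfolding norm by auto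
  have Q_fixed: "\<forall>t\<in>N. t (\<Prod>t\<in>N. t q) = (\<Prod>t\<in>N. t q)"
    using aut_group_prod_orbit_fixed[OF N_group _ N_finite] by blast
  have "\<forall>t\<in>N. t (p * R) = p * R"
  proof
    fix t assume t: "t \<in> N"
    have "t f = f"
      using f t by (simp add: fixed_def)
    then show "t (p * R) = p * R"
      using Q_fixed[rule_format, OF t] \<open>(\<Prod>t\<in>N. t q) \<noteq> 0\<close> unfolding f_eq
      by (simp add: field_aut_divide[OF N_aut[OF t]])
  qed
  moreover have "p * R \<in> polys K x n" "(\<Prod>t\<in>N. t q) \<in> polys K x n"
    using pq(1,2) N_polys unfolding R_def by (auto intro!: polys_mult polys_prod[OF K])
  ultimately show ?thesis
    using that Q_fixed \<open>(\<Prod>t\<in>N. t q) \<noteq> 0\<close> f_eq by blast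
qed

lemma fixed_N_poly_terms:
  assumes p: "p \<in> polys K x n" and fixed: "\<forall>t\<in>N. t p = p"
  obtains M c where "poly_expansion K x n p M c"
    "\<forall>m\<in>M. \<forall>t\<in>N. t (c m * laurent x n (\<lambda>i. int (m i))) = c m * laurent x n (\<lambda>i. int (m i))"
proof -
  obtain M c where e: "poly_expansion K x n p M c"
    using polys_expansion[OF K p] by blast
  have "\<forall>m\<in>M. t (c m * laurent x n (\<lambda>i. int (m i))) = c m * laurent x n (\<lambda>i. int (m i))"
    if t: "t \<in> N" for t
    unfolding laurent_of_nat
    by (rule poly_expansion_terms_fixed[OF K x_indep N_aut[OF t] N_K[OF t] _ e])
      (use t fixed in \<open>auto simp: N_def\<close>)
  then show ?thesis
    using that e by blast
qed

lemma invariant_exponents_coefficient: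
  assumes m: "m \<in> invariant_exponents"
  obtains c where "c \<in> K" "c \<noteq> 0" "\<forall>t\<in>N. t (c * laurent x n m) = c * laurent x n m"
    "purely_qm G x n \<Longrightarrow> c = 1"
proof (cases "purely_qm G x n")
  case True
  have "t (laurent x n m) = laurent x n m" if "t \<in> N" for t
    unfolding laurent_field_aut[OF N_aut[OF that]]
    using purely_qm_N_fixes_x[OF True that] by (intro laurent_cong) auto
  then show ?thesis
    using that[of 1] subfield_1[OF K] by simp
next
  case False
  then show ?thesis
    using m that unfolding invariant_exponents_def by blast
qed

lemma monomial_basis_exists:
  obtains a b where
    "\<forall>i<n. a i \<in> K \<and> a i \<noteq> 0 \<and> (\<forall>t\<in>N. t (a i * laurent x n (b i)) = a i * laurent x n (b i))"
    "\<forall>i<n. b i i \<noteq> 0 \<and> (\<forall>j<i. b i j = 0)"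
    "\<forall>m\<in>invariant_exponents. \<exists>k. \<forall>j<n. m j = (\<Sum>l<n. k l * b l j)"
    "purely_qm G x n \<Longrightarrow> \<forall>i<n. a i = 1"
proof -
  obtain b where b: "\<forall>i<n. b i \<in> invariant_exponents \<and> b i i \<noteq> 0 \<and> (\<forall>j<i. b i j = 0)"
    and b_spans: "\<forall>m\<in>invariant_exponents. \<exists>k. \<forall>j<n. m j = (\<Sum>l<n. k l * b l j)"
    using invariant_triangular_basis by blast
  have "\<forall>i<n. \<exists>c. (c \<in> K \<and> c \<noteq> 0 \<and> (\<forall>t\<in>N. t (c * laurent x n (b i)) = c * laurent x n (b i))) \<and>
      (purely_qm G x n \<longrightarrow> c = 1)"
    using b invariant_exponents_coefficient by metis
  then obtain a where a: "\<forall>i<n. a i \<in> K \<and> a i \<noteq> 0 \<and>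
      (\<forall>t\<in>N. t (a i * laurent x n (b i)) = a i * laurent x n (b i))"
    and a_purely: "purely_qm G x n \<longrightarrow> (\<forall>i<n. a i = 1)"
    by metis
  show ?thesis
    by (rule that[OF a _ b_spans]) (use b a_purely in auto)
qed

end

section \<open>Monomial generators of the invariant field\<close>

context qm_setting
begin

context
  fixes a :: "nat \<Rightarrow> 'L" and b :: "nat \<Rightarrow> nat \<Rightarrow> int"
  assumes a: "\<forall>i<n. a i \<in> K \<and> a i \<noteq> 0 \<and>
      (\<forall>t\<in>N. t (a i * laurent x n (b i)) = a i * laurent x n (b i))"
    and b_triangular: "\<forall>i<n. b i i \<noteq> 0 \<and> (\<forall>j<i. b i j = 0)"
    and b_spans: "\<forall>m\<in>invariant_exponents. \<exists>k. \<forall>j<n. m j = (\<Sum>l<n. k l * b l j)"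
begin

definition y :: "nat \<Rightarrow> 'L" where
  "y i = a i * laurent x n (b i)"

lemma y_nonzero: "\<forall>i<n. y i \<noteq> 0"
  using a laurent_nonzero[OF x_nonzero] by (simp add: y_def)

lemma y_fixed: "i < n \<Longrightarrow> t \<in> N \<Longrightarrow> t (y i) = y i"
  using a by (simp add: y_def)

lemma laurent_y_fixed:
  assumes "t \<in> N"
  shows "t (laurent y n u) = laurent y n u"
  unfolding laurent_field_aut[OF N_aut[OF assms]]
  using assms by (intro laurent_cong) (auto simp: y_fixed)

lemma a_powers: "(\<Prod>l<n. a l powi u l) \<in> K" "(\<Prod>l<n. a l powi u l) \<noteq> 0"
  using a by (auto intro!: subfield_prod[OF K] subfield_power_int[OF K])

lemma laurent_y: "laurent y n u = (\<Prod>l<n. a l powi u l) * laurent x n (\<lambda>j. \<Sum>l<n. u l * b l j)"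
  unfolding y_def laurent_scaled
  by (simp add: laurent_def[of "\<lambda>l. laurent x n (b l)"] laurent_row_comb[OF x_nonzero])

lemma y_exponents_unique:
  assumes "c \<in> K" "c \<noteq> 0" "c' \<in> K" "c * laurent y n u = c' * laurent y n v"
  shows "\<forall>j<n. u j = v j"
proof -
  have "(c * (\<Prod>l<n. a l powi u l)) * laurent x n (\<lambda>j. \<Sum>l<n. u l * b l j) =
      (c' * (\<Prod>l<n. a l powi v l)) * laurent x n (\<lambda>j. \<Sum>l<n. v l * b l j)"
    using assms(4) by (simp add: laurent_y mult.assoc)
  then have "\<forall>j<n. (\<Sum>l<n. u l * b l j) = (\<Sum>l<n. v l * b l j)"
    by (rule laurent_exponents_unique[OF K x_indep, rotated 3])
      (use assms a_powers in \<open>auto intro: subfield_mult[OF K]\<close>)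
  then show ?thesis
    by (rule triangular_row_comb_inj[OF b_triangular])
qed

lemma invariant_laurent_eq_y_term:
  assumes c: "c \<in> K" "c \<noteq> 0" and fixed: "\<forall>t\<in>N. t (c * laurent x n m) = c * laurent x n m"
  obtains w v where "w \<in> fixed K N" "w \<noteq> 0" "c * laurent x n m = w * laurent y n v"
proof -
  obtain v where v: "\<forall>j<n. m j = (\<Sum>l<n. v l * b l j)"
    using b_spans c fixed unfolding invariant_exponents_def by blast
  define w where "w = c / (\<Prod>l<n. a l powi v l)"
  have "laurent x n m = laurent x n (\<lambda>j. \<Sum>l<n. v l * b l j)"
    using v by (intro laurent_cong refl) simp
  moreover have "c / P * (P * X) = c * X" if "P \<noteq> 0" for P X :: 'L
    using that by simp
  ultimately have eq: "c * laurent x n m = w * laurent y n v"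
    using a_powers(2)[of v] unfolding w_def laurent_y by metis
  have "t w = w" if t: "t \<in> N" for t
  proof -
    have "t (w * laurent y n v) = w * laurent y n v"
      using fixed t unfolding eq by blast
    then have "t w * laurent y n v = w * laurent y n v"
      by (simp add: field_aut_mult[OF N_aut[OF t]] laurent_y_fixed[OF t])
    then show ?thesis
      using laurent_nonzero[OF y_nonzero] by simp
  qed
  moreover have "w \<in> K" "w \<noteq> 0"
    unfolding w_def using c a_powers[of v] by (auto intro: subfield_divide[OF K])
  ultimately have "w \<in> fixed K N"
    by (simp add: fixed_def)
  then show ?thesis
    using \<open>w \<noteq> 0\<close> eq by (rule that)
qed

lemma laurent_y_in_field_gen: "laurent y n v \<in> field_gen (fixed K N) (y ` {..<n})"
  unfolding laurent_def
  by (intro subfield_prod[OF is_subfield_field_gen] subfield_power_int[OF is_subfield_field_gen]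
      field_gen_gens_subset[THEN subsetD]) simp

lemma invariant_term_in_field_gen:
  assumes c: "c \<in> K" and fixed: "\<forall>t\<in>N. t (c * laurent x n m) = c * laurent x n m"
  shows "c * laurent x n m \<in> field_gen (fixed K N) (y ` {..<n})"
proof (cases "c = 0")
  case True
  then show ?thesis
    using subfield_0[OF is_subfield_field_gen] by simp
next
  case False
  then obtain w v where "w \<in> fixed K N" "c * laurent x n m = w * laurent y n v"
    using invariant_laurent_eq_y_term[OF c] fixed by blast
  then show ?thesis
    using field_gen_base_subset laurent_y_in_field_gen
    by (metis subfield_mult[OF is_subfield_field_gen] subsetD)
qed

lemma fixed_poly_in_field_gen:
  assumes p: "p \<in> polys K x n" and fixed: "\<forall>t\<in>N. t p = p"
  shows "p \<in> field_gen (fixed K N) (y ` {..<n})"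
proof -
  obtain M c where e: "poly_expansion K x n p M c"
    and terms: "\<forall>m\<in>M. \<forall>t\<in>N. t (c m * laurent x n (\<lambda>i. int (m i))) = c m * laurent x n (\<lambda>i. int (m i))"
    using fixed_N_poly_terms[OF p fixed] by blast
  have "c m * laurent x n (\<lambda>i. int (m i)) \<in> field_gen (fixed K N) (y ` {..<n})" if "m \<in> M" for m
    using e terms that by (intro invariant_term_in_field_gen) (auto simp: poly_expansion_def)
  then show ?thesis
    using e unfolding poly_expansion_def laurent_of_nat[symmetric]
    by (auto intro: subfield_sum[OF is_subfield_field_gen])
qed

lemma field_gen_y: "field_gen (fixed K N) (y ` {..<n}) = fixed UNIV N"
proof
  show "field_gen (fixed K N) (y ` {..<n}) \<subseteq> fixed UNIV N"
    using y_fixed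
    by (intro field_gen_least fixed_subfield subfield_UNIV) (auto simp: fixed_def N_aut)
next
  show "fixed UNIV N \<subseteq> field_gen (fixed K N) (y ` {..<n})"
  proof
    fix f assume "f \<in> fixed UNIV N"
    then obtain P Q where "P \<in> polys K x n" "Q \<in> polys K x n"
      "\<forall>t\<in>N. t P = P" "\<forall>t\<in>N. t Q = Q" "f = P / Q"
      by (rule fixed_N_fraction)
    then show "f \<in> field_gen (fixed K N) (y ` {..<n})"
      by (simp add: fixed_poly_in_field_gen subfield_divide[OF is_subfield_field_gen])
  qed
qed

lemma alg_indep_y: "alg_indep (fixed K N) y n"
  unfolding alg_indep_def
proof (intro allI impI)
  fix c :: "(nat \<Rightarrow> nat) \<Rightarrow> 'L" and M
  assume "finite M \<and> (\<forall>m\<in>M. \<forall>i\<ge>n. m i = 0) \<and> (\<forall>m\<in>M. c m \<in> fixed K N) \<and>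
      (\<Sum>m\<in>M. c m * (\<Prod>i<n. y i ^ m i)) = 0"
  then have M: "finite M" and supp: "\<forall>m\<in>M. \<forall>i\<ge>n. m i = 0" and cK: "\<forall>m\<in>M. c m \<in> K"
    and sum0: "(\<Sum>m\<in>M. c m * (\<Prod>i<n. y i ^ m i)) = 0"
    by (auto simp: fixed_def)
  define d where "d m = c m * (\<Prod>l<n. a l powi int (m l))" for m
  define \<phi> where "\<phi> m = (\<lambda>j. \<Sum>l<n. int (m l) * b l j)" for m
  have "\<forall>m\<in>M. d m = 0"
  proof (rule laurent_independent[OF K x_indep M])
    show "\<forall>m\<in>M. d m \<in> K"
      unfolding d_def using cK by (intro ballI subfield_mult[OF K] a_powers(1)) auto
    show "\<forall>m\<in>M. \<forall>m'\<in>M. (\<forall>j<n. \<phi> m j = \<phi> m' j) \<longrightarrow> m = m'"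
    proof (intro ballI impI)
      fix m m' assume m: "m \<in> M" "m' \<in> M" and eq: "\<forall>j<n. \<phi> m j = \<phi> m' j"
      have "\<forall>l<n. int (m l) = int (m' l)"
        using eq unfolding \<phi>_def by (rule triangular_row_comb_inj[OF b_triangular])
      then show "m = m'"
        using supp m by (metis ext not_le of_nat_eq_iff)
    qed
    show "(\<Sum>m\<in>M. d m * laurent x n (\<phi> m)) = 0"
      using sum0 by (simp add: d_def \<phi>_def laurent_of_nat[symmetric] laurent_y mult.assoc)
  qed
  then show "\<forall>m\<in>M. c m = 0"
    using a by (auto simp: d_def)
qed

lemma G_y_image:
  assumes s: "s \<in> G" and j: "j < n"
  obtains w v where "w \<in> fixed K N" "w \<noteq> 0" "s (y j) = w * laurent y n v"
proof -
  obtain M e where Me: "\<forall>j<n. e j \<in> K \<and> e j \<noteq> 0 \<and> s (x j) = e j * laurent x n (\<lambda>i. M i j)"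
    using G_quasi_monomial[OF s] by blast
  then have sx: "\<forall>j<n. s (x j) = e j * laurent x n (\<lambda>i. M i j)"
    by blast
  define c where "c = s (a j) * (\<Prod>t<n. e t powi b j t)"
  have sy: "s (y j) = c * laurent x n (\<lambda>i. \<Sum>t<n. b j t * M i t)"
    unfolding y_def c_def
    by (simp add: field_aut_mult[OF G_aut[OF s]] laurent_quasi_monomial_image[OF x_nonzero G_aut[OF s] sx]
        mult.assoc)
  have "c \<in> K" "c \<noteq> 0"
    unfolding c_def using a j Me G_K[OF s] field_aut_eq_0_iff[OF G_aut[OF s]]
    by (auto intro!: subfield_mult[OF K] subfield_prod[OF K] subfield_power_int[OF K])
  moreover have "s (y j) \<in> fixed UNIV N"
    using N_fixes_UNIV_image[OF s] y_fixed[OF j] by (auto simp: fixed_def)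
  then have "\<forall>t\<in>N. t (c * laurent x n (\<lambda>i. \<Sum>t<n. b j t * M i t)) = c * laurent x n (\<lambda>i. \<Sum>t<n. b j t * M i t)"
    unfolding sy by (simp add: fixed_def)
  ultimately show ?thesis
    using that unfolding sy by (rule invariant_laurent_eq_y_term)
qed

lemma G_y_matrix:
  assumes s: "s \<in> G"
  obtains A where "\<forall>j<n. \<exists>w. w \<in> fixed K N \<and> w \<noteq> 0 \<and> s (y j) = w * laurent y n (\<lambda>i. A i j)"
proof -
  have "\<forall>j\<in>{..<n}. \<exists>v. \<exists>w. w \<in> fixed K N \<and> w \<noteq> 0 \<and> s (y j) = w * laurent y n v"
    using G_y_image[OF s] by (metis lessThan_iff)
  then have "\<exists>V. \<forall>j\<in>{..<n}. \<exists>w. w \<in> fixed K N \<and> w \<noteq> 0 \<and> s (y j) = w * laurent y n (V j)"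
    by (rule bchoice)
  then obtain V where "\<forall>j\<in>{..<n}. \<exists>w. w \<in> fixed K N \<and> w \<noteq> 0 \<and> s (y j) = w * laurent y n (V j)" ..
  then show ?thesis
    by (intro that[of "\<lambda>i j. V j i"]) simp
qed

lemma y_matrices_inverse:
  assumes s: "s \<in> G" and s': "s' \<in> G" and inverse: "\<And>z. s (s' z) = z"
    and A: "\<forall>j<n. \<exists>w. w \<in> K \<and> w \<noteq> 0 \<and> s (y j) = w * laurent y n (\<lambda>i. A i j)"
    and A': "\<forall>j<n. \<exists>w. w \<in> K \<and> w \<noteq> 0 \<and> s' (y j) = w * laurent y n (\<lambda>i. A' i j)"
    and i: "i < n" and j: "j < n"
  shows "(\<Sum>l<n. A i l * A' l j) = (if i = j then 1 else 0)"
proof -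
  obtain w where w: "\<forall>l<n. w l \<in> K \<and> w l \<noteq> 0 \<and> s (y l) = w l * laurent y n (\<lambda>i. A i l)"
    using A by metis
  then have sy: "\<forall>l<n. s (y l) = w l * laurent y n (\<lambda>i. A i l)"
    by blast
  obtain w' where w': "w' \<in> K" "s' (y j) = w' * laurent y n (\<lambda>i. A' i j)"
    using A' j by blast
  have "1 * laurent y n (\<lambda>i. if i = j then 1 else 0) = y j"
    using laurent_unit[OF y_nonzero j] by simp
  also have "\<dots> = s (s' (y j))"
    by (simp add: inverse)
  also have "\<dots> = (s w' * (\<Prod>l<n. w l powi A' l j)) * laurent y n (\<lambda>i. \<Sum>l<n. A' l j * A i l)"
    unfolding w'(2)
    by (simp add: field_aut_mult[OF G_aut[OF s]] laurent_quasi_monomial_image[OF y_nonzero G_aut[OF s] sy]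
        mult.assoc)
  finally have "\<forall>i<n. (if i = j then 1 else 0) = (\<Sum>l<n. A' l j * A i l)"
    by (rule y_exponents_unique[rotated 3])
      (use w w'(1) G_K[OF s] in \<open>auto intro!: subfield_1[OF K] subfield_mult[OF K] subfield_prod[OF K]
        subfield_power_int[OF K]\<close>)
  then show ?thesis
    using i by (simp add: mult.commute)
qed

lemma qm_action_y: "qm_action G k (fixed K N) y n"
  unfolding qm_action_def
proof (intro conjI ballI)
  show "s ` fixed K N \<subseteq> fixed K N" if "s \<in> G" for s
    using that G_K by (intro G_preserves_fixed_N) auto
  show "fixed (fixed K N) G = k"
    using N_subset G_qm unfolding qm_action_def fixed_def by blast
next
  fix s assume s: "s \<in> G"
  obtain A where A: "\<forall>j<n. \<exists>w. w \<in> fixed K N \<and> w \<noteq> 0 \<and> s (y j) = w * laurent y n (\<lambda>i. A i j)"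
    using G_y_matrix[OF s] by blast
  obtain A' where A': "\<forall>j<n. \<exists>w. w \<in> fixed K N \<and> w \<noteq> 0 \<and> inv s (y j) = w * laurent y n (\<lambda>i. A' i j)"
    using G_y_matrix[OF G_inv[OF s]] by blast
  have fixed_K: "fixed K N \<subseteq> K"
    by (auto simp: fixed_def)
  have "gl_int n A"
    unfolding gl_int_def
  proof (intro exI[of _ A'] allI impI conjI)
    show "(\<Sum>l<n. A i l * A' l j) = (if i = j then 1 else 0)" if "i < n" "j < n" for i j
      using A A' fixed_K that
      by (intro y_matrices_inverse[OF s G_inv[OF s] aut_group_apply_inv[OF G_group s]]) blast+
    show "(\<Sum>l<n. A' i l * A l j) = (if i = j then 1 else 0)" if "i < n" "j < n" for i j
      using A A' fixed_K that
      by (intro y_matrices_inverse[OF G_inv[OF s] s aut_group_inv_apply[OF G_group s]]) blast+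
  qed
  then show "\<exists>A. qm_matrix s (fixed K N) y n A"
    using A unfolding qm_matrix_def lmon_eq_laurent by blast
qed

lemma y_diagonal_imp_N:
  assumes g: "g \<in> G" and diag: "\<forall>j<n. \<exists>d\<in>K. g (y j) = d * y j"
  shows "g \<in> N"
proof -
  obtain M e where Me: "\<forall>j<n. e j \<in> K \<and> e j \<noteq> 0 \<and> g (x j) = e j * laurent x n (\<lambda>i. M i j)"
    using G_quasi_monomial[OF g] by blast
  then have gx: "\<forall>j<n. g (x j) = e j * laurent x n (\<lambda>i. M i j)"
    by blast
  have "\<forall>i<n. (\<Sum>t<n. b j t * M i t) = b j i" if j: "j < n" for j
  proof -
    obtain d where d: "d \<in> K" "g (y j) = d * y j"
      using diag j by blast
    have "(g (a j) * (\<Prod>t<n. e t powi b j t)) * laurent x n (\<lambda>i. \<Sum>t<n. b j t * M i t) = g (y j)"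
      unfolding y_def
      by (simp add: field_aut_mult[OF G_aut[OF g]] laurent_quasi_monomial_image[OF x_nonzero G_aut[OF g] gx]
          mult.assoc)
    also have "\<dots> = (d * a j) * laurent x n (b j)"
      unfolding d(2) by (simp add: y_def mult.assoc)
    finally show ?thesis
      by (rule laurent_exponents_unique[OF K x_indep, rotated 3])
        (use a j Me d(1) G_K[OF g] field_aut_eq_0_iff[OF G_aut[OF g]] in
          \<open>auto intro!: subfield_mult[OF K] subfield_prod[OF K] subfield_power_int[OF K]\<close>)
  qed
  moreover have "\<forall>l<n. \<exists>k. \<forall>j<n. int (card N) * (if j = l then 1 else 0) = (\<Sum>r<n. k r * b r j)"
    using bspec[OF b_spans card_N_unit_invariant] by simp
  moreover have "card N \<noteq> 0"
    using N_finite N_group by (auto simp: aut_group_def)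
  ultimately have M: "M i l = (if i = l then 1 else 0)" if "i < n" "l < n" for i l
    using that by (intro matrix_fixing_full_rank_rows_eq_id[where c = "int (card N)"]) auto
  have "g (x l) = e l * x l" if "l < n" for l
    using gx that laurent_unit[OF x_nonzero that] M
    by (simp cong: laurent_cong)
  then show ?thesis
    using g Me unfolding N_def by blast
qed

lemma same_y_matrix_imp_N:
  assumes s: "s \<in> G" and s': "s' \<in> G"
    and A: "qm_matrix s (fixed K N) y n A" and A': "qm_matrix s' (fixed K N) y n A"
  shows "inv s' \<circ> s \<in> N"
proof (rule y_diagonal_imp_N)
  show "inv s' \<circ> s \<in> G"
    by (rule G_comp[OF G_inv[OF s'] s])
  show "\<forall>j<n. \<exists>d\<in>K. (inv s' \<circ> s) (y j) = d * y j"
  proof (intro allI impI)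
    fix j assume j: "j < n"
    obtain c where c: "c \<in> fixed K N" "s (y j) = c * lmon y n A j"
      using A j by (auto simp: qm_matrix_def)
    obtain c' where c': "c' \<in> fixed K N" "c' \<noteq> 0" "s' (y j) = c' * lmon y n A j"
      using A' j by (auto simp: qm_matrix_def)
    have "s (y j) = (c / c') * s' (y j)"
      using c c' by simp
    then have "(inv s' \<circ> s) (y j) = inv s' (c / c') * y j"
      by (simp only: comp_apply field_aut_mult[OF G_aut[OF G_inv[OF s']]] aut_group_inv_apply[OF G_group s'])
    moreover have "inv s' (c / c') \<in> K"
      using c c' by (auto simp: fixed_def intro: G_K[OF G_inv[OF s']] subfield_divide[OF K])
    ultimately show "\<exists>d\<in>K. (inv s' \<circ> s) (y j) = d * y j"
      by blast
  qed
qed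

end

end

theorem proposition1p12:
  fixes K k :: "'L::field set" and x :: "nat \<Rightarrow> 'L" and n :: nat
    and G :: "('L \<Rightarrow> 'L) set"
  assumes "finite_ext K k"
    and "alg_indep K x n"
    and "field_gen K (x ` {..<n}) = UNIV"
    and "finite G" and "aut_group G"
    and "\<forall>\<sigma>\<in>G. \<forall>a\<in>k. \<sigma> a = a"
    and "qm_action G k K x n"
  shows "\<exists>N y. normal_subgroup N G \<and>
     \<comment> \<open>(i)\<close>
     field_gen (fixed K N) (y ` {..<n}) = fixed UNIV N \<and>
     alg_indep (fixed K N) y n \<and>
     (\<exists>a e. (\<forall>i<n. a i \<in> K \<and> a i \<noteq> 0 \<and> y i = a i * (\<Prod>j<n. x j powi e i j)) \<and>
            (purely_qm G x n \<longrightarrow> (\<forall>i<n. a i = 1))) \<and>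
     \<comment> \<open>(ii): G/N acts (through G) by quasi-monomial k-automorphisms on K^N(y)\<close>
     (\<forall>\<sigma>\<in>G. \<sigma> ` fixed UNIV N \<subseteq> fixed UNIV N) \<and>
     qm_action G k (fixed K N) y n \<and>
     \<comment> \<open>(iii): rho_y : G/N \<rightarrow> GL_n(Z) is injective\<close>
     (\<forall>\<sigma>\<in>G. \<forall>\<tau>\<in>G. \<forall>A. qm_matrix \<sigma> (fixed K N) y n A \<and> qm_matrix \<tau> (fixed K N) y n A
        \<longrightarrow> inv \<tau> \<circ> \<sigma> \<in> N)"
proof -
  interpret qm_setting K k x n G
    using assms by unfold_locales (simp_all add: finite_ext_def)
  obtain a b where basis:
    "\<forall>i<n. a i \<in> K \<and> a i \<noteq> 0 \<and> (\<forall>t\<in>N. t (a i * laurent x n (b i)) = a i * laurent x n (b i))"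
    "\<forall>i<n. b i i \<noteq> 0 \<and> (\<forall>j<i. b i j = 0)"
    "\<forall>m\<in>invariant_exponents. \<exists>k. \<forall>j<n. m j = (\<Sum>l<n. k l * b l j)"
    and a_purely: "purely_qm G x n \<Longrightarrow> \<forall>i<n. a i = 1"
    using monomial_basis_exists by blast
  show ?thesis
  proof (rule exI[of _ N], rule exI[of _ "y a b"], intro conjI)
    show "normal_subgroup N G"
      by (rule normal_subgroup_N)
    show "field_gen (fixed K N) (y a b ` {..<n}) = fixed UNIV N"
      by (rule field_gen_y[OF basis])
    show "alg_indep (fixed K N) (y a b) n"
      by (rule alg_indep_y[OF basis])
    show "\<exists>a' e. (\<forall>i<n. a' i \<in> K \<and> a' i \<noteq> 0 \<and> y a b i = a' i * (\<Prod>j<n. x j powi e i j)) \<and>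
        (purely_qm G x n \<longrightarrow> (\<forall>i<n. a' i = 1))"
      using basis(1) a_purely by (intro exI[of _ a] exI[of _ b]) (simp add: y_def[OF basis] laurent_def)
    show "\<forall>\<sigma>\<in>G. \<sigma> ` fixed UNIV N \<subseteq> fixed UNIV N"
      using N_fixes_UNIV_image by blast
    show "qm_action G k (fixed K N) (y a b) n"
      by (rule qm_action_y[OF basis])
    show "\<forall>\<sigma>\<in>G. \<forall>\<tau>\<in>G. \<forall>A. qm_matrix \<sigma> (fixed K N) (y a b) n A \<and> qm_matrix \<tau> (fixed K N) (y a b) n A
        \<longrightarrow> inv \<tau> \<circ> \<sigma> \<in> N"
      using same_y_matrix_imp_N[OF basis] by blast
  qed
qed

end
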